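(* Let $z_0\in T$ and $k\in\{0,1,2,\dots\}\cup\{\infty\}$. Then $U_2(T,z_0,k)$ is a dense $G_\delta$ subset of $C^k(T)$.
   Context: $D=\{|z|<1\}$, $T=\{|z|=1\}$, $D(z_0,r)$ the open disk of center $z_0$ and radius $r$. For $k\in\{0,1,2,\dots\}\cup\{\infty\}$, $C^k(T)$ is the space of $u:T\to\mathbb{C}$ such that $\theta\mapsto u(e^{i\theta})$ is $k$ times continuously differentiable on $\mathbb{R}$, with the topology given by the seminorms $\sup_{\theta\in\mathbb{R}}|\frac{d^l}{d\theta^l}u(e^{i\theta})|$ for all integers $0\le l\le k$. For $z_0\in T$ and $r>0$ put $\Omega(z_0,r)=D(z_0,r)\cap\{|z|>1\}$. $U_2(T,z_0,k)$ is the set of $u\in C^k(T)$ for which there exist no $r>0$ and no continuous $\lambda:T\cup\Omega(z_0,r)\to\mathbb{C}$ holomorphic on $\Omega(z_0,r)$ with $\lambda=u$ on $D(z_0,r)\cap T$. *)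

theory Defs
  imports "HOL-Analysis.Analysis"
begin

fun Dn :: "nat \<Rightarrow> (real \<Rightarrow> complex) \<Rightarrow> real \<Rightarrow> complex" where
  "Dn 0 f = f"
| "Dn (Suc l) f = (\<lambda>t. vector_derivative (Dn l f) (at t))"

definition onT :: "(complex \<Rightarrow> complex) \<Rightarrow> real \<Rightarrow> complex" where
  "onT u = (\<lambda>\<theta>. u (cis \<theta>))"

text \<open>C^k(T), k in nat or infinity; functions on T represented as complex functions that
  vanish off the unit circle.\<close>
definition Ck :: "enat \<Rightarrow> (complex \<Rightarrow> complex) set" where
  "Ck k = {u. (\<forall>z. z \<notin> sphere 0 1 \<longrightarrow> u z = 0) \<and>
     (\<forall>l. enat l \<le> k \<longrightarrow> continuous_on UNIV (Dn l (onT u))) \<and>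
     (\<forall>l. enat l < k \<longrightarrow> (\<forall>t. Dn l (onT u) differentiable at t))}"

definition seminorm_Ck :: "nat \<Rightarrow> (complex \<Rightarrow> complex) \<Rightarrow> real" where
  "seminorm_Ck l u = (SUP \<theta>. norm (Dn l (onT u) \<theta>))"

definition Ck_open :: "enat \<Rightarrow> (complex \<Rightarrow> complex) set \<Rightarrow> bool" where
  "Ck_open k U \<longleftrightarrow> U \<subseteq> Ck k \<and>
     (\<forall>u\<in>U. \<exists>N \<epsilon>. \<epsilon> > 0 \<and>
        {v \<in> Ck k. \<forall>l\<le>N. enat l \<le> k \<longrightarrow> seminorm_Ck l (\<lambda>z. v z - u z) < \<epsilon>} \<subseteq> U)"

lemma istopology_Ck_open: "istopology (Ck_open k)"
  unfolding istopology_def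
proof (intro conjI allI impI)
  fix S T assume S: "Ck_open k S" and T: "Ck_open k T"
  show "Ck_open k (S \<inter> T)"
    unfolding Ck_open_def
  proof (intro conjI ballI)
    show "S \<inter> T \<subseteq> Ck k" using S unfolding Ck_open_def by blast
    fix u assume u: "u \<in> S \<inter> T"
    obtain N1 e1 where 1: "e1 > 0" "{v \<in> Ck k. \<forall>l\<le>N1. enat l \<le> k \<longrightarrow> seminorm_Ck l (\<lambda>z. v z - u z) < e1} \<subseteq> S"
      using S u unfolding Ck_open_def by blast
    obtain N2 e2 where 2: "e2 > 0" "{v \<in> Ck k. \<forall>l\<le>N2. enat l \<le> k \<longrightarrow> seminorm_Ck l (\<lambda>z. v z - u z) < e2} \<subseteq> T"
      using T u unfolding Ck_open_def by blast
    show "\<exists>N \<epsilon>. \<epsilon> > 0 \<and> {v \<in> Ck k. \<forall>l\<le>N. enat l \<le> k \<longrightarrow> seminorm_Ck l (\<lambda>z. v z - u z) < \<epsilon>} \<subseteq> S \<inter> T"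
    proof (intro exI conjI)
      show "min e1 e2 > 0" using 1 2 by simp
      show "{v \<in> Ck k. \<forall>l\<le>max N1 N2. enat l \<le> k \<longrightarrow> seminorm_Ck l (\<lambda>z. v z - u z) < min e1 e2} \<subseteq> S \<inter> T"
      proof
        fix v assume v: "v \<in> {v \<in> Ck k. \<forall>l\<le>max N1 N2. enat l \<le> k \<longrightarrow> seminorm_Ck l (\<lambda>z. v z - u z) < min e1 e2}"
        then have "v \<in> {v \<in> Ck k. \<forall>l\<le>N1. enat l \<le> k \<longrightarrow> seminorm_Ck l (\<lambda>z. v z - u z) < e1}"
          by fastforce
        moreover from v have "v \<in> {v \<in> Ck k. \<forall>l\<le>N2. enat l \<le> k \<longrightarrow> seminorm_Ck l (\<lambda>z. v z - u z) < e2}"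
          by fastforce
        ultimately show "v \<in> S \<inter> T" using 1(2) 2(2) by blast
      qed
    qed
  qed
next
  fix K assume K: "\<forall>S\<in>K. Ck_open k S"
  show "Ck_open k (\<Union>K)"
    unfolding Ck_open_def
  proof (intro conjI ballI)
    show "\<Union>K \<subseteq> Ck k" using K unfolding Ck_open_def by blast
    fix u assume "u \<in> \<Union>K"
    then obtain S where "S \<in> K" "u \<in> S" by blast
    with K obtain N e where "e > 0" "{v \<in> Ck k. \<forall>l\<le>N. enat l \<le> k \<longrightarrow> seminorm_Ck l (\<lambda>z. v z - u z) < e} \<subseteq> S"
      unfolding Ck_open_def by blast
    moreover have "S \<subseteq> \<Union>K" using \<open>S \<in> K\<close> by (rule Union_upper)
    ultimately show "\<exists>N \<epsilon>. \<epsilon> > 0 \<and> {v \<in> Ck k. \<forall>l\<le>N. enat l \<le> k \<longrightarrow> seminorm_Ck l (\<lambda>z. v z - u z) < \<epsilon>} \<subseteq> \<Union>K"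
      by (intro exI[of _ N] exI[of _ e] conjI) auto
  qed
qed

definition Ck_top :: "enat \<Rightarrow> (complex \<Rightarrow> complex) topology" where
  "Ck_top k = topology (Ck_open k)"

lemma openin_Ck_top: "openin (Ck_top k) U \<longleftrightarrow> Ck_open k U"
  unfolding Ck_top_def by (simp add: istopology_Ck_open)

definition Omega :: "complex \<Rightarrow> real \<Rightarrow> complex set" where
  "Omega z0 r = ball z0 r \<inter> {z. norm z > 1}"

definition U2 :: "complex \<Rightarrow> enat \<Rightarrow> (complex \<Rightarrow> complex) set" where
  "U2 z0 k = {u \<in> Ck k. \<not> (\<exists>r>0. \<exists>g.
      continuous_on (sphere 0 1 \<union> Omega z0 r) g \<and> g holomorphic_on Omega z0 r \<and>
      (\<forall>z \<in> ball z0 r \<inter> sphere 0 1. g z = u z))}"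

end

theory Submission
  imports Defs "HOL-Complex_Analysis.Complex_Analysis" "HOL-Computational_Algebra.Polynomial"
    "HOL-Library.Periodic_Fun"
begin

text \<open>
  A function \<open>u\<close> on \<open>T\<close> extends across \<open>z\<^sub>0\<close> iff for some \<open>n\<close> it is a uniform limit on \<open>T\<close>
  of functions continuous on \<open>T \<union> \<Omega>(z\<^sub>0,1/(n+1))\<close>, holomorphic and bounded by \<open>n+1\<close> on
  \<open>\<Omega>(z\<^sub>0,1/(n+1))\<close>. The nontrivial half is a two-constants estimate: the weight
  \<open>exp (\<lambda> (a - sqrt ((w - z\<^sub>0)/z\<^sub>0)))\<close> has modulus at most \<open>1\<close> on the arc \<open>|w - z\<^sub>0| = r\<close>
  outside the disc and at most \<open>exp (\<lambda> a)\<close> on \<open>T\<close>, so by the maximum principle uniform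
  convergence on \<open>T\<close> propagates into \<open>\<Omega>(z\<^sub>0,r/4)\<close>. Each of these countably many approximability
  conditions is closed already for the uniform norm on \<open>T\<close>, so \<open>U\<^sub>2\<close>, the intersection of
  their complements, is a \<open>G\<^sub>\<delta>\<close>.

  For density, the \<open>C\<^sup>\<infinity>\<close> function \<open>h\<close> equal to \<open>exp (-1 / Im (z/z\<^sub>0))\<close> where \<open>Im (z/z\<^sub>0) > 0\<close>
  and to \<open>0\<close> on the other half of \<open>T\<close> does not extend: pulled back by \<open>w \<mapsto> z\<^sub>0 e\<^sup>w\<close>, an
  extension would vanish on a segment of the imaginary axis, hence on a half-disc, hence on the
  whole diameter, where \<open>h > 0\<close> somewhere. So if \<open>u\<close> extends, \<open>u + c h\<close> does not for any \<open>c \<noteq> 0\<close>,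
  and small \<open>c\<close> give arbitrarily close functions.
\<close>

fun nth_differentiable :: "nat \<Rightarrow> (real \<Rightarrow> real) \<Rightarrow> bool" where
  "nth_differentiable 0 f = True"
| "nth_differentiable (Suc n) f =
     (\<exists>f'. (\<forall>x. (f has_real_derivative f' x) (at x)) \<and> nth_differentiable n f')"

lemma nth_differentiable_SucD: "nth_differentiable (Suc n) f \<Longrightarrow> nth_differentiable n f"
proof (induction n arbitrary: f)
  case (Suc n)
  then obtain f' where "\<forall>x. (f has_real_derivative f' x) (at x)" "nth_differentiable (Suc n) f'"
    by auto
  with Suc.IH show ?case by auto
qed simp

lemma nth_differentiable_const: "nth_differentiable n (\<lambda>x. c)"
proof (induction n arbitrary: c)
  case (Suc n)
  show ?case using Suc.IH[of 0] by (auto intro!: exI[of _ "\<lambda>x. 0"] derivative_eq_intros)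
qed simp

lemma nth_differentiable_add:
  "nth_differentiable n f \<Longrightarrow> nth_differentiable n g \<Longrightarrow> nth_differentiable n (\<lambda>x. f x + g x)"
proof (induction n arbitrary: f g)
  case (Suc n)
  then obtain f' g' where f': "\<forall>x. (f has_real_derivative f' x) (at x)" "nth_differentiable n f'"
    and g': "\<forall>x. (g has_real_derivative g' x) (at x)" "nth_differentiable n g'" by auto
  show ?case using Suc.IH[OF f'(2) g'(2)] f' g'
    by (auto intro!: exI[of _ "\<lambda>x. f' x + g' x"] DERIV_add)
qed simp

lemma nth_differentiable_mult:
  "nth_differentiable n f \<Longrightarrow> nth_differentiable n g \<Longrightarrow> nth_differentiable n (\<lambda>x. f x * g x)"
proof (induction n arbitrary: f g)
  case (Suc n)
  then obtain f' g' where f': "\<forall>x. (f has_real_derivative f' x) (at x)" "nth_differentiable n f'"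
    and g': "\<forall>x. (g has_real_derivative g' x) (at x)" "nth_differentiable n g'" by auto
  have "nth_differentiable n (\<lambda>x. f' x * g x + g' x * f x)"
    using Suc.IH[OF f'(2) nth_differentiable_SucD[OF Suc.prems(2)]]
      Suc.IH[OF g'(2) nth_differentiable_SucD[OF Suc.prems(1)]]
    by (rule nth_differentiable_add)
  then show ?case using f' g'
    by (auto intro!: exI[of _ "\<lambda>x. f' x * g x + g' x * f x"] DERIV_mult)
qed simp

lemma nth_differentiable_diff:
  "nth_differentiable n f \<Longrightarrow> nth_differentiable n g \<Longrightarrow> nth_differentiable n (\<lambda>x. f x - g x)"
  using nth_differentiable_add[of n f "\<lambda>x. -1 * g x"]
    nth_differentiable_mult[OF nth_differentiable_const[of n "-1"]] by simp

lemma nth_differentiable_compose: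
  "nth_differentiable n f \<Longrightarrow> nth_differentiable n g \<Longrightarrow> nth_differentiable n (\<lambda>x. f (g x))"
proof (induction n arbitrary: f g)
  case (Suc n)
  then obtain f' g' where f': "\<forall>x. (f has_real_derivative f' x) (at x)" "nth_differentiable n f'"
    and g': "\<forall>x. (g has_real_derivative g' x) (at x)" "nth_differentiable n g'" by auto
  have "nth_differentiable n (\<lambda>x. f' (g x) * g' x)"
    using Suc.IH[OF f'(2) nth_differentiable_SucD[OF Suc.prems(2)]] g'(2)
    by (rule nth_differentiable_mult)
  moreover have "\<forall>x. ((\<lambda>x. f (g x)) has_real_derivative f' (g x) * g' x) (at x)"
    using f' g' by (blast intro: DERIV_chain2)
  ultimately show ?case by auto
qed simp

lemma nth_differentiable_sin_cos: "nth_differentiable n sin \<and> nth_differentiable n cos"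
proof (induction n)
  case (Suc n)
  then have "nth_differentiable n (\<lambda>x. - sin x)"
    using nth_differentiable_diff[OF nth_differentiable_const[of n 0], of sin] by simp
  moreover have "\<forall>x. (sin has_real_derivative cos x) (at x)"
    "\<forall>x. (cos has_real_derivative - sin x) (at x)"
    by (auto intro: DERIV_sin DERIV_cos)
  ultimately show ?case using Suc by (metis nth_differentiable.simps(2))
qed simp

text \<open>The derivatives of \<open>exp (-1/x)\<close> are of the form \<open>p (1/x) exp (-1/x)\<close> with \<open>p\<close> a polynomial.\<close>

definition flat_step :: "real poly \<Rightarrow> real \<Rightarrow> real" where
  "flat_step p x = (if x > 0 then poly p (1/x) * exp (-1/x) else 0)"

lemma poly_times_exp_minus_tendsto_0:
  fixes p :: "real poly"
  shows "((\<lambda>y. poly p y * exp (-y)) \<longlongrightarrow> 0) at_top"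
proof -
  have "((\<lambda>y. \<Sum>i\<le>degree p. coeff p i * (y ^ i / exp y)) \<longlongrightarrow> 0) at_top"
  proof (rule tendsto_null_sum)
    fix i
    have "((\<lambda>y. coeff p i * (y ^ i / exp y)) \<longlongrightarrow> coeff p i * 0) at_top"
      by (intro tendsto_intros tendsto_power_div_exp_0)
    then show "((\<lambda>y. coeff p i * (y ^ i / exp y)) \<longlongrightarrow> 0) at_top" by simp
  qed
  moreover have "(\<lambda>y. \<Sum>i\<le>degree p. coeff p i * (y ^ i / exp y)) = (\<lambda>y. poly p y * exp (-y))"
    by (auto simp: poly_altdef sum_distrib_right exp_minus divide_inverse mult.assoc)
  ultimately show ?thesis by simp
qed

lemma flat_step_has_derivative_0: "(flat_step p has_real_derivative 0) (at 0)"
proof -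
  have left: "((\<lambda>y. flat_step p y / y) \<longlongrightarrow> 0) (at_left 0)"
    by (rule tendsto_eventually) (auto simp: eventually_at_filter flat_step_def)
  have "((\<lambda>y. poly (pCons 0 p) (1/y) * exp (-1/y)) \<longlongrightarrow> 0) (at_right 0)"
    using poly_times_exp_minus_tendsto_0[of "pCons 0 p"]
    by (subst filterlim_at_right_to_top) (simp add: divide_inverse)
  then have right: "((\<lambda>y. flat_step p y / y) \<longlongrightarrow> 0) (at_right 0)"
    by (rule Lim_transform_eventually) (auto simp: eventually_at_filter flat_step_def)
  have "((\<lambda>y. (flat_step p y - flat_step p 0) / (y - 0)) \<longlongrightarrow> 0) (at 0)"
    using left right by (simp add: flat_step_def filterlim_at_split)
  then show ?thesis by (simp add: has_field_derivative_iff)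
qed

lemma flat_step_has_derivative:
  "(flat_step p has_real_derivative flat_step (pCons 0 (pCons 0 (p - pderiv p))) x) (at x)"
proof -
  let ?q = "pCons 0 (pCons 0 (p - pderiv p))"
  consider "x > 0" | "x < 0" | "x = 0" by linarith
  then show ?thesis
  proof cases
    case 1
    have inv: "((\<lambda>x. 1/x) has_real_derivative (-(1/x^2))) (at x)"
      using 1 by (auto intro!: derivative_eq_intros simp: power2_eq_square)
    have "((\<lambda>x. poly p (1/x)) has_real_derivative poly (pderiv p) (1/x) * (-(1/x^2))) (at x)"
      by (rule DERIV_chain2[OF poly_DERIV inv])
    moreover have "((\<lambda>x. exp(-1/x)) has_real_derivative exp(-1/x) * (1/x^2)) (at x)"
      using 1 by (auto intro!: derivative_eq_intros simp: power2_eq_square)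
    ultimately have "((\<lambda>x. poly p (1/x) * exp(-1/x)) has_real_derivative flat_step ?q x) (at x)"
      by (rule DERIV_cong[OF DERIV_mult])
        (use 1 in \<open>simp add: flat_step_def algebra_simps power2_eq_square\<close>)
    then show ?thesis
      by (rule has_field_derivative_transform_within_open[of _ _ _ "{0<..}"])
        (use 1 in \<open>auto simp: flat_step_def\<close>)
  next
    case 2
    have "((\<lambda>x. 0) has_real_derivative flat_step ?q x) (at x)"
      using 2 by (simp add: flat_step_def)
    then show ?thesis
      by (rule has_field_derivative_transform_within_open[of _ _ _ "{..<0}"])
        (use 2 in \<open>auto simp: flat_step_def\<close>)
  next
    case 3
    then show ?thesis using flat_step_has_derivative_0[of p] by (simp add: flat_step_def)
  qed
qed

lemma nth_differentiable_flat_step: "nth_differentiable n (flat_step p)"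
  by (induction n arbitrary: p) (use flat_step_has_derivative in auto)

definition infinitely_differentiable :: "(real \<Rightarrow> real) \<Rightarrow> bool" where
  "infinitely_differentiable f \<longleftrightarrow> (\<forall>n. nth_differentiable n f)"

lemma nth_differentiable_Suc_deriv:
  assumes "nth_differentiable (Suc n) f"
  shows "(\<forall>x. (f has_real_derivative deriv f x) (at x)) \<and> nth_differentiable n (deriv f)"
proof -
  obtain f' where f': "\<forall>x. (f has_real_derivative f' x) (at x)" "nth_differentiable n f'"
    using assms by auto
  moreover from f'(1) have "f' = deriv f" by (auto intro!: ext DERIV_imp_deriv[symmetric])
  ultimately show ?thesis by simp
qed

lemma infinitely_differentiable_has_deriv:
  "infinitely_differentiable f \<Longrightarrow> (f has_real_derivative deriv f x) (at x)"
  using nth_differentiable_Suc_deriv[of 0 f] by (simp add: infinitely_differentiable_def)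

lemma infinitely_differentiable_deriv_funpow:
  "infinitely_differentiable f \<Longrightarrow> infinitely_differentiable ((deriv ^^ l) f)"
  by (induction l) (auto simp: infinitely_differentiable_def dest: nth_differentiable_Suc_deriv)

lemma Dn_of_real:
  assumes "infinitely_differentiable f"
  shows "Dn l (\<lambda>t. complex_of_real (f t)) = (\<lambda>t. of_real ((deriv ^^ l) f t))"
proof (induction l)
  case (Suc l)
  have "vector_derivative (\<lambda>t. complex_of_real ((deriv ^^ l) f t)) (at t)
      = of_real ((deriv ^^ Suc l) f t)" for t
    using infinitely_differentiable_has_deriv[OF infinitely_differentiable_deriv_funpow[OF assms]]
    by (auto intro!: vector_derivative_at has_vector_derivative_of_real)
  then show ?case using Suc by simp
qed simp

lemma Dn_of_real_differentiable:
  assumes "infinitely_differentiable f"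
  shows "Dn l (\<lambda>t. complex_of_real (f t)) differentiable at t"
  unfolding Dn_of_real[OF assms]
  using infinitely_differentiable_has_deriv[OF infinitely_differentiable_deriv_funpow[OF assms]]
  by (auto intro!: differentiableI_vector has_vector_derivative_of_real)

lemma deriv_periodic:
  assumes per: "\<And>x. f (x + p) = f x" and f: "\<And>x. (f has_real_derivative deriv f x) (at x)"
  shows "deriv f (x + p) = deriv f x"
proof -
  have "((\<lambda>y. f (y + p)) has_real_derivative deriv f (x + p) * 1) (at x)"
    by (rule DERIV_chain2[where f=f]) (use f in \<open>auto intro!: derivative_eq_intros\<close>)
  then have "(f has_real_derivative deriv f (x + p)) (at x)" using per by simp
  then show ?thesis using f DERIV_unique by blast
qed

lemma deriv_funpow_periodic:
  assumes "infinitely_differentiable f" "\<And>x. f (x + p) = f x"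
  shows "(deriv ^^ l) f (x + p) = (deriv ^^ l) f x"
proof (induction l arbitrary: x)
  case (Suc l)
  show ?case
    using deriv_periodic[OF Suc infinitely_differentiable_has_deriv
        [OF infinitely_differentiable_deriv_funpow[OF assms(1)]]] by simp
qed (use assms in simp)

lemma continuous_periodic_bounded:
  fixes f :: "real \<Rightarrow> 'a::real_normed_vector"
  assumes cont: "continuous_on UNIV f" and per: "\<And>x. f (x + p) = f x" and "0 < p"
  shows "bounded (range f)"
proof -
  interpret periodic_fun_simple f p by standard (rule per)
  have "f x \<in> f ` {0..p}" for x
  proof
    let ?k = "\<lfloor>x / p\<rfloor>"
    show "f x = f (x - of_int ?k * p)" using minus_of_int[of x ?k] by simp
    have "of_int ?k * p \<le> x" "x < (of_int ?k + 1) * p"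
      using floor_divide_lower floor_divide_upper \<open>0 < p\<close> by blast+
    then show "x - of_int ?k * p \<in> {0..p}" by (simp add: algebra_simps)
  qed
  then have "range f \<subseteq> f ` {0..p}" by blast
  moreover have "compact (f ` {0..p})"
    by (rule compact_continuous_image) (use cont in \<open>auto intro: continuous_on_subset\<close>)
  ultimately show ?thesis using compact_imp_bounded bounded_subset by blast
qed

lemma Dn_add_scaled:
  assumes "\<And>j t. j < l \<Longrightarrow> Dn j f differentiable at t" "\<And>j t. j < l \<Longrightarrow> Dn j g differentiable at t"
  shows "Dn l (\<lambda>t. f t + c * g t) = (\<lambda>t. Dn l f t + c * Dn l g t)"
  using assms
proof (induction l)
  case (Suc l)
  have "((\<lambda>t. Dn l f t + c * Dn l g t) has_vector_derivative
      vector_derivative (Dn l f) (at t) + c * vector_derivative (Dn l g) (at t)) (at t)" for t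
    using Suc.prems[of l t]
    by (intro has_vector_derivative_add has_vector_derivative_mult_right)
      (auto simp: vector_derivative_works[symmetric])
  then show ?case using Suc by (auto intro!: ext vector_derivative_at)
qed simp

lemma Dn_scaled:
  assumes "\<And>j t. j < l \<Longrightarrow> Dn j g differentiable at t"
  shows "Dn l (\<lambda>t. c * g t) = (\<lambda>t. c * Dn l g t)"
proof -
  have Dn_zero: "Dn j (\<lambda>t. 0) = (\<lambda>t. 0)" for j
    by (induction j) (auto simp: vector_derivative_const_at)
  show ?thesis using Dn_add_scaled[of l "\<lambda>t. 0" g c] assms by (simp add: Dn_zero)
qed

lemma Ck_add_scaled:
  assumes u: "u \<in> Ck k" and v: "v \<in> Ck k"
  shows "(\<lambda>z. u z + c * v z) \<in> Ck k"
proof -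
  have Dn_eq: "Dn l (onT (\<lambda>z. u z + c * v z)) = (\<lambda>t. Dn l (onT u) t + c * Dn l (onT v) t)"
    if "enat l \<le> k" for l
  proof -
    have "Dn j (onT u) differentiable at t \<and> Dn j (onT v) differentiable at t" if "j < l" for j t
    proof -
      have "enat j < k" using that \<open>enat l \<le> k\<close> by (meson enat_ord_simps(2) less_le_trans)
      then show ?thesis using u v by (simp add: Ck_def)
    qed
    then show ?thesis
      using Dn_add_scaled[of l "onT u" "onT v" c] by (simp add: onT_def)
  qed
  show ?thesis
    unfolding Ck_def
  proof (intro CollectI conjI allI impI)
    fix z :: complex assume "z \<notin> sphere 0 1"
    then show "u z + c * v z = 0" using u v by (simp add: Ck_def)
  next
    fix l assume "enat l \<le> k"
    then show "continuous_on UNIV (Dn l (onT (\<lambda>z. u z + c * v z)))"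
      using u v unfolding Dn_eq[OF \<open>enat l \<le> k\<close>] by (auto simp: Ck_def intro!: continuous_intros)
  next
    fix l t assume "enat l < k"
    then have "Dn l (onT u) differentiable at t" "Dn l (onT v) differentiable at t"
      using u v by (auto simp: Ck_def)
    then show "Dn l (onT (\<lambda>z. u z + c * v z)) differentiable at t"
      unfolding Dn_eq[OF less_imp_le[OF \<open>enat l < k\<close>]]
      by (intro differentiable_add differentiable_mult differentiable_const)
  qed
qed

lemma Ck_continuous_on_sphere:
  assumes "u \<in> Ck k"
  shows "continuous_on (sphere 0 1) u"
  unfolding continuous_on_eq_continuous_within
proof
  fix z :: complex assume z: "z \<in> sphere 0 1"
  have "enat 0 \<le> k" by (simp add: zero_enat_def[symmetric])
  then have "continuous_on UNIV (Dn 0 (onT u))" using assms unfolding Ck_def by blast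
  then have cont_u: "isCont (onT u) t" for t by (simp add: continuous_on_eq_continuous_at)
  define \<theta> where "\<theta> w = Arg (w * cnj z) + Arg z" for w
  have zc: "z * cnj z = 1" using complex_norm_square[of z] z by simp
  have eq: "onT u (\<theta> w) = u w" if "w \<in> sphere 0 1" for w
  proof -
    have "w * cnj z \<noteq> 0" "z \<noteq> 0" using that z by auto
    then have "cis (Arg (w * cnj z)) * cis (Arg z) = (w * cnj z) * z"
      using that z by (simp add: cis_Arg sgn_div_norm norm_mult)
    then have "cis (\<theta> w) = (w * cnj z) * z" by (simp add: \<theta>_def cis_mult)
    also have "\<dots> = w" using zc by (simp add: mult.assoc mult.commute[of "cnj z"])
    finally show ?thesis by (simp add: onT_def)
  qed
  \<comment> \<open>\<open>Arg\<close> is continuous away from its cut, so angles are measured relative to \<open>z\<close>.\<close>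
  have "isCont Arg (z * cnj z)" by (rule continuous_at_Arg) (simp add: zc)
  then have "isCont (\<lambda>w. Arg (w * cnj z)) z" by (rule isCont_o2[rotated]) (intro continuous_intros)
  then have "isCont \<theta> z" unfolding \<theta>_def by (intro continuous_intros)
  then have "isCont (\<lambda>w. onT u (\<theta> w)) z" using cont_u by (rule isCont_o2)
  then have "continuous (at z within sphere 0 1) (\<lambda>w. onT u (\<theta> w))"
    by (rule continuous_at_imp_continuous_within)
  then show "continuous (at z within sphere 0 1) u"
    by (rule continuous_transform_within[OF _ zero_less_one z]) (simp add: eq)
qed

lemma norm_le_seminorm_Ck_0:
  assumes u: "u \<in> Ck k" and z: "z \<in> sphere 0 1"
  shows "norm (u z) \<le> seminorm_Ck 0 u"
proof -
  have "z \<noteq> 0" using z by auto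
  then have "cis (Arg z) = z" using z by (simp add: cis_Arg sgn_div_norm)
  then have u_z: "u z = Dn 0 (onT u) (Arg z)" by (simp add: onT_def)
  have "compact (u ` sphere 0 1)"
    by (rule compact_continuous_image[OF Ck_continuous_on_sphere[OF u] compact_sphere])
  then obtain B where "\<forall>y\<in>u ` sphere 0 1. norm y \<le> B"
    using compact_imp_bounded bounded_iff by metis
  then have "bdd_above (range (\<lambda>\<theta>. norm (Dn 0 (onT u) \<theta>)))"
    by (intro bdd_aboveI2[where M=B]) (simp add: onT_def)
  then show ?thesis unfolding seminorm_Ck_def u_z by (rule cSUP_upper[OF UNIV_I])
qed

lemma topspace_Ck_top: "topspace (Ck_top k) = Ck k"
proof
  have "Ck_open k (topspace (Ck_top k))" by (simp only: openin_Ck_top[symmetric] openin_topspace)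
  then show "topspace (Ck_top k) \<subseteq> Ck k" by (simp add: Ck_open_def)
  have "openin (Ck_top k) (Ck k)" unfolding openin_Ck_top Ck_open_def
    by (intro conjI ballI exI[of _ "0::nat"] exI[of _ "1::real"]) auto
  then show "Ck k \<subseteq> topspace (Ck_top k)" by (rule openin_subset)
qed

lemma openin_Ck_topI_uniform:
  assumes "S \<subseteq> Ck k"
    and "\<And>u. u \<in> S \<Longrightarrow> \<exists>e>0. \<forall>v\<in>Ck k. (\<forall>z\<in>sphere 0 1. norm (v z - u z) < e) \<longrightarrow> v \<in> S"
  shows "openin (Ck_top k) S"
  unfolding openin_Ck_top Ck_open_def
proof (intro conjI ballI)
  fix u assume u: "u \<in> S"
  then obtain e where e: "e > 0" "\<And>v. v \<in> Ck k \<Longrightarrow> \<forall>z\<in>sphere 0 1. norm (v z - u z) < e \<Longrightarrow> v \<in> S"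
    using assms(2) by blast
  have "v \<in> S" if v: "v \<in> Ck k" and small: "seminorm_Ck 0 (\<lambda>z. v z - u z) < e" for v
  proof (rule e(2)[OF v], intro ballI)
    have "(\<lambda>z. v z + (-1) * u z) \<in> Ck k" using v u assms(1) by (intro Ck_add_scaled) auto
    then show "norm (v z - u z) < e" if "z \<in> sphere 0 1" for z
      using norm_le_seminorm_Ck_0[of "\<lambda>z. v z - u z" k z] that small by simp
  qed
  then show "\<exists>N \<epsilon>. \<epsilon> > 0 \<and>
      {v \<in> Ck k. \<forall>l\<le>N. enat l \<le> k \<longrightarrow> seminorm_Ck l (\<lambda>z. v z - u z) < \<epsilon>} \<subseteq> S"
    using e(1) by (intro exI[of _ 0] exI[of _ e]) (auto simp: zero_enat_def[symmetric])
qed (use assms(1) in blast)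

lemma open_Omega: "open (Omega z0 r)"
  unfolding Omega_def by (intro open_Int open_ball open_Collect_less continuous_intros)

lemma Omega_mono: "r \<le> r' \<Longrightarrow> Omega z0 r \<subseteq> Omega z0 r'"
  unfolding Omega_def by auto

lemma closure_Omega_subset: "closure (Omega z0 r) \<subseteq> cball z0 r \<inter> {w. 1 \<le> norm w}"
  unfolding Omega_def
  by (rule closure_minimal) (auto intro!: closed_Int closed_Collect_le continuous_intros)

lemma frontier_Omega_subset:
  "frontier (Omega z0 r) \<subseteq> sphere 0 1 \<union> (sphere z0 r \<inter> {w. 1 < norm w})"
proof
  fix w assume "w \<in> frontier (Omega z0 r)"
  then have "w \<in> cball z0 r" "1 \<le> norm w" "w \<notin> Omega z0 r"
    using closure_Omega_subset[of z0 r] by (auto simp: frontier_def interior_open[OF open_Omega])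
  then show "w \<in> sphere 0 1 \<union> (sphere z0 r \<inter> {w. 1 < norm w})" by (auto simp: Omega_def)
qed

definition extendable_outside :: "complex \<Rightarrow> (complex \<Rightarrow> complex) \<Rightarrow> bool" where
  "extendable_outside z0 u \<longleftrightarrow> (\<exists>r>0. \<exists>g. continuous_on (sphere 0 1 \<union> Omega z0 r) g \<and>
      g holomorphic_on Omega z0 r \<and> (\<forall>z \<in> ball z0 r \<inter> sphere 0 1. g z = u z))"

lemma U2_eq: "U2 z0 k = {u \<in> Ck k. \<not> extendable_outside z0 u}"
  by (simp add: U2_def extendable_outside_def)

lemma extendable_outside_lincomb:
  assumes "extendable_outside z0 f" "extendable_outside z0 g"
  shows "extendable_outside z0 (\<lambda>z. a * f z + b * g z)"
proof -
  obtain r1 g1 where r1: "r1 > 0" "continuous_on (sphere 0 1 \<union> Omega z0 r1) g1"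
    "g1 holomorphic_on Omega z0 r1" "\<forall>z \<in> ball z0 r1 \<inter> sphere 0 1. g1 z = f z"
    using assms(1) by (auto simp: extendable_outside_def)
  obtain r2 g2 where r2: "r2 > 0" "continuous_on (sphere 0 1 \<union> Omega z0 r2) g2"
    "g2 holomorphic_on Omega z0 r2" "\<forall>z \<in> ball z0 r2 \<inter> sphere 0 1. g2 z = g z"
    using assms(2) by (auto simp: extendable_outside_def)
  define r where "r = min r1 r2"
  have sub: "Omega z0 r \<subseteq> Omega z0 r1" "Omega z0 r \<subseteq> Omega z0 r2"
    by (auto intro!: Omega_mono simp: r_def)
  show ?thesis unfolding extendable_outside_def
  proof (intro exI[of _ r] conjI exI[of _ "\<lambda>z. a * g1 z + b * g2 z"])
    show "continuous_on (sphere 0 1 \<union> Omega z0 r) (\<lambda>z. a * g1 z + b * g2 z)"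
      using continuous_on_subset[OF r1(2), of "sphere 0 1 \<union> Omega z0 r"]
        continuous_on_subset[OF r2(2), of "sphere 0 1 \<union> Omega z0 r"] sub
      by (auto intro!: continuous_intros)
    show "(\<lambda>z. a * g1 z + b * g2 z) holomorphic_on Omega z0 r"
      using holomorphic_on_subset[OF r1(3) sub(1)] holomorphic_on_subset[OF r2(3) sub(2)]
      by (auto intro!: holomorphic_intros)
  qed (use r1 r2 in \<open>auto simp: r_def\<close>)
qed

lemma Re_csqrt_sq_ge:
  fixes s :: complex
  assumes "norm s \<le> 1/2" "1 \<le> norm (1 + s)"
  shows "3/8 * norm s \<le> (Re (csqrt s))^2"
proof -
  define w where "w = csqrt s"
  have ws: "s = w * w" by (simp add: w_def power2_eq_square[symmetric])
  have Re_s: "Re s = (Re w)^2 - (Im w)^2" using ws by (simp add: power2_eq_square)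
  have "norm s = (norm w)^2" using ws by (simp add: norm_mult power2_eq_square)
  then have norm_s: "norm s = (Re w)^2 + (Im w)^2" by (simp add: cmod_power2)
  have norm_s2: "(norm s)^2 = (Re s)^2 + (Im s)^2" by (simp add: cmod_power2)
  have "1 \<le> (norm (1 + s))^2" using assms(2) by (simp add: one_le_power)
  also have "(norm (1 + s))^2 = (1 + Re s)^2 + (Im s)^2" by (simp add: cmod_power2)
  finally have "0 \<le> 2 * Re s + (norm s)^2" using norm_s2 by (simp add: power2_eq_square algebra_simps)
  moreover have "(norm s)^2 \<le> norm s * (1/2)"
    using mult_left_mono[OF assms(1), of "norm s"] by (simp add: power2_eq_square)
  ultimately show ?thesis using Re_s norm_s unfolding w_def by linarith
qed

lemma notin_nonpos_Reals_outside_unit_disc: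
  fixes s :: complex
  assumes "s \<noteq> 0" "norm s \<le> 1/2" "1 \<le> norm (1 + s)"
  shows "s \<notin> \<real>\<^sub>\<le>\<^sub>0"
proof
  assume "s \<in> \<real>\<^sub>\<le>\<^sub>0"
  then have Re_s: "Re s \<le> 0" and Im_s: "Im s = 0" by (auto simp: complex_nonpos_Reals_iff)
  have "\<bar>Re s\<bar> \<le> 1/2" using abs_Re_le_cmod[of s] assms(2) by linarith
  moreover have "norm (1 + s) = \<bar>1 + Re s\<bar>" using Im_s by (simp add: cmod_def)
  ultimately have "Re s = 0" using Re_s assms(3) by linarith
  with Im_s assms(1) show False by (simp add: complex_eq_iff)
qed

lemma isCont_csqrt_0: "isCont csqrt 0"
proof -
  have "((\<lambda>x::complex. norm x) \<longlongrightarrow> 0) (at 0)"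
    by (rule tendsto_norm_zero) (rule tendsto_ident_at)
  then have "((\<lambda>x::complex. sqrt (norm x)) \<longlongrightarrow> sqrt 0) (at 0)"
    by (rule tendsto_real_sqrt)
  then have "((\<lambda>x. norm (csqrt x)) \<longlongrightarrow> 0) (at (0::complex))"
    by (simp only: norm_csqrt real_sqrt_zero)
  then have "(csqrt \<longlongrightarrow> 0) (at (0::complex))" by (rule tendsto_norm_zero_cancel)
  then show ?thesis unfolding isCont_def by simp
qed

lemma norm_rotate_unit:
  assumes "norm z0 = 1"
  shows "norm ((w - z0) * cnj z0) = norm (w - z0)" "norm (1 + (w - z0) * cnj z0) = norm w"
proof -
  have "z0 * cnj z0 = 1" using complex_norm_square[of z0] assms by simp
  moreover have "1 + (w - z0) * cnj z0 = w * cnj z0 + (1 - z0 * cnj z0)" by (simp add: algebra_simps)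
  ultimately have "1 + (w - z0) * cnj z0 = w * cnj z0" by simp
  then show "norm ((w - z0) * cnj z0) = norm (w - z0)" "norm (1 + (w - z0) * cnj z0) = norm w"
    using assms by (simp_all add: norm_mult)
qed

text \<open>For \<open>|z\<^sub>0| = 1\<close>, \<open>(w - z\<^sub>0) * cnj z\<^sub>0 = (w - z\<^sub>0)/z\<^sub>0\<close>; points outside the disc near \<open>z\<^sub>0\<close>
  are mapped off the cut of \<open>csqrt\<close>.\<close>

definition exterior_weight :: "complex \<Rightarrow> real \<Rightarrow> real \<Rightarrow> complex \<Rightarrow> complex" where
  "exterior_weight z0 lam a w = exp (of_real lam * (of_real a - csqrt ((w - z0) * cnj z0)))"

lemma norm_exterior_weight:
  "norm (exterior_weight z0 lam a w) = exp (lam * (a - Re (csqrt ((w - z0) * cnj z0))))"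
  by (simp add: exterior_weight_def norm_exp_eq_Re)

lemma continuous_on_exterior_weight:
  assumes "norm z0 = 1"
  shows "continuous_on (cball z0 (1/2) \<inter> {w. 1 \<le> norm w}) (exterior_weight z0 lam a)"
proof (rule continuous_at_imp_continuous_on, rule ballI)
  fix w assume w: "w \<in> cball z0 (1/2) \<inter> {w. 1 \<le> norm w}"
  define s where "s = (w - z0) * cnj z0"
  have rot: "isCont (\<lambda>w. (w - z0) * cnj z0) w" by (intro continuous_intros)
  have "isCont (\<lambda>w. csqrt ((w - z0) * cnj z0)) w"
  proof (cases "s = 0")
    case True
    then have "isCont csqrt ((w - z0) * cnj z0)" using isCont_csqrt_0 by (simp only: s_def)
    then show ?thesis by (rule isCont_o2[OF rot])
  next
    case False
    have "norm (w - z0) \<le> 1/2" "1 \<le> norm w" using w by (auto simp: dist_norm norm_minus_commute)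
    then have "norm s \<le> 1/2" "1 \<le> norm (1 + s)" unfolding s_def norm_rotate_unit[OF assms] .
    then have "s \<notin> \<real>\<^sub>\<le>\<^sub>0" using False by (rule notin_nonpos_Reals_outside_unit_disc[rotated])
    then show ?thesis using rot by (simp add: s_def)
  qed
  then show "isCont (exterior_weight z0 lam a) w"
    unfolding exterior_weight_def by (intro continuous_intros)
qed

lemma holomorphic_on_exterior_weight:
  assumes "norm z0 = 1"
  shows "exterior_weight z0 lam a holomorphic_on Omega z0 (1/2)"
  unfolding exterior_weight_def
proof (intro holomorphic_intros)
  fix w assume w: "w \<in> Omega z0 (1/2)"
  define s where "s = (w - z0) * cnj z0"
  have "norm (w - z0) \<le> 1/2" "1 < norm w" using w by (auto simp: Omega_def dist_norm norm_minus_commute)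
  then have "norm s \<le> 1/2" "1 \<le> norm (1 + s)" "s \<noteq> 0"
    using assms unfolding s_def norm_rotate_unit[OF assms] by auto
  then show "(w - z0) * cnj z0 \<notin> \<real>\<^sub>\<le>\<^sub>0"
    unfolding s_def[symmetric] by (intro notin_nonpos_Reals_outside_unit_disc)
qed

lemma norm_exterior_weight_le:
  "0 \<le> lam \<Longrightarrow> norm (exterior_weight z0 lam a w) \<le> exp (lam * a)"
  unfolding norm_exterior_weight
  using Re_csqrt[of "(w - z0) * cnj z0"] by (simp add: mult_left_mono algebra_simps)

lemma norm_exterior_weight_le_1:
  assumes "norm z0 = 1" "0 \<le> lam" "r \<le> 1/2" "w \<in> sphere z0 r" "1 \<le> norm w"
  shows "norm (exterior_weight z0 lam (sqrt (3*r/8)) w) \<le> 1"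
proof -
  define s where "s = (w - z0) * cnj z0"
  have "norm (w - z0) = r" using assms(4) by (simp add: dist_norm norm_minus_commute)
  then have s: "norm s = r" "1 \<le> norm (1 + s)"
    using assms(5) unfolding s_def norm_rotate_unit[OF assms(1)] by simp_all
  then have "3/8 * r \<le> (Re (csqrt s))^2" using Re_csqrt_sq_ge[of s] assms(3) by simp
  then have "sqrt (3*r/8) \<le> Re (csqrt s)"
    using real_sqrt_le_mono[of "3/8 * r"] Re_csqrt[of s] by simp
  then show ?thesis
    unfolding norm_exterior_weight s_def[symmetric] using assms(2) by (simp add: mult_nonneg_nonpos)
qed

lemma exp_le_norm_exterior_weight:
  assumes z0: "norm z0 = 1" and "0 \<le> lam" "norm (w - z0) \<le> \<rho>"
  shows "exp (lam * (a - sqrt \<rho>)) \<le> norm (exterior_weight z0 lam a w)"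
proof -
  have "Re (csqrt ((w - z0) * cnj z0)) \<le> sqrt (norm (w - z0))"
    using complex_Re_le_cmod[of "csqrt ((w - z0) * cnj z0)"] by (simp only: norm_csqrt norm_rotate_unit[OF z0])
  also have "\<dots> \<le> sqrt \<rho>" using assms(3) by simp
  finally show ?thesis
    unfolding norm_exterior_weight using assms(2) by (simp add: mult_left_mono)
qed

lemma closure_Omega_subset_Un:
  assumes "r < R"
  shows "closure (Omega z0 r) \<subseteq> sphere 0 1 \<union> Omega z0 R"
proof
  fix w assume "w \<in> closure (Omega z0 r)"
  then have "w \<in> cball z0 r \<inter> {w. 1 \<le> norm w}" using closure_Omega_subset by blast
  then show "w \<in> sphere 0 1 \<union> Omega z0 R" using assms by (cases "norm w = 1") (auto simp: Omega_def)
qed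

lemma norm_exterior_weight_mult_le_frontier:
  assumes z0: "norm z0 = 1" and r: "r \<le> 1/2" "r < R"
    and on_T: "\<And>w. w \<in> sphere 0 1 \<Longrightarrow> norm (D w) \<le> \<delta>"
    and on_Omega: "\<And>w. w \<in> Omega z0 R \<Longrightarrow> norm (D w) \<le> A"
    and nonneg: "0 \<le> A" "0 \<le> \<delta>" "0 \<le> lam" and w: "w \<in> frontier (Omega z0 r)"
  shows "norm (D w * exterior_weight z0 lam (sqrt (3*r/8)) w) \<le> A + \<delta> * exp (lam * sqrt (3*r/8))"
proof -
  let ?W = "exterior_weight z0 lam (sqrt (3*r/8)) w"
  have "0 \<le> \<delta> * exp (lam * sqrt (3*r/8))" using nonneg by simp
  consider "w \<in> sphere 0 1" | "w \<in> sphere z0 r" "1 < norm w"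
    using frontier_Omega_subset w by blast
  then show ?thesis
  proof cases
    case 1
    have "norm (D w) * norm ?W \<le> \<delta> * exp (lam * sqrt (3*r/8))"
      using on_T[OF 1] norm_exterior_weight_le[OF nonneg(3)] nonneg(2) by (intro mult_mono) auto
    then show ?thesis using nonneg(1) by (simp add: norm_mult)
  next
    case 2
    then have "w \<in> Omega z0 R" using r by (auto simp: Omega_def dist_commute)
    then have "norm (D w) * norm ?W \<le> A * 1"
      using on_Omega norm_exterior_weight_le_1[OF z0 nonneg(3) r(1) 2(1)] 2(2) nonneg(1)
      by (intro mult_mono) auto
    then show ?thesis using \<open>0 \<le> \<delta> * exp (lam * sqrt (3*r/8))\<close> by (simp add: norm_mult)
  qed
qed

text \<open>A two-constants estimate: a bound \<open>\<delta>\<close> on \<open>T\<close> and a bound \<open>A\<close> on \<open>\<Omega>(z\<^sub>0,R)\<close> give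
  a bound on \<open>\<Omega>(z\<^sub>0,r/4)\<close> that tends to \<open>0\<close> with \<open>\<delta>\<close> once \<open>\<lambda>\<close> is large.\<close>

lemma Omega_two_constants:
  fixes D :: "complex \<Rightarrow> complex"
  assumes z0: "norm z0 = 1" and r: "0 < r" "r \<le> 1/2" "r < R"
    and cont: "continuous_on (sphere 0 1 \<union> Omega z0 R) D" and hol: "D holomorphic_on Omega z0 R"
    and on_T: "\<And>w. w \<in> sphere 0 1 \<Longrightarrow> norm (D w) \<le> \<delta>"
    and on_Omega: "\<And>w. w \<in> Omega z0 R \<Longrightarrow> norm (D w) \<le> A"
    and nonneg: "0 \<le> A" "0 \<le> \<delta>" "0 \<le> lam" and z: "z \<in> Omega z0 (r/4)"
  shows "norm (D z) \<le> (A + \<delta> * exp (lam * sqrt (3*r/8))) * exp (- lam * (sqrt (3*r/8) - sqrt (r/4)))"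
proof -
  define a where "a = sqrt (3*r/8)"
  define W where "W = exterior_weight z0 lam a"
  define B where "B = A + \<delta> * exp (lam * a)"
  have cl_half: "closure (Omega z0 r) \<subseteq> cball z0 (1/2) \<inter> {w. 1 \<le> norm w}"
    using closure_Omega_subset subset_cball[OF r(2), of z0] by blast
  have "Omega z0 r \<subseteq> Omega z0 R" "Omega z0 r \<subseteq> Omega z0 (1/2)"
    using r by (auto intro!: Omega_mono)
  then have "(\<lambda>w. D w * W w) holomorphic_on interior (Omega z0 r)"
    unfolding W_def interior_open[OF open_Omega]
    by (intro holomorphic_on_mult holomorphic_on_subset[OF hol]
        holomorphic_on_subset[OF holomorphic_on_exterior_weight[OF z0]])
  moreover have "continuous_on (closure (Omega z0 r)) (\<lambda>w. D w * W w)"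
    unfolding W_def
    by (intro continuous_on_mult continuous_on_subset[OF cont closure_Omega_subset_Un[OF r(3)]]
        continuous_on_subset[OF continuous_on_exterior_weight[OF z0] cl_half])
  moreover have "bounded (Omega z0 r)" unfolding Omega_def by (intro bounded_Int) simp
  moreover have "norm (D w * W w) \<le> B" if "w \<in> frontier (Omega z0 r)" for w
    unfolding W_def B_def a_def
    using r(2,3) on_T on_Omega nonneg that by (rule norm_exterior_weight_mult_le_frontier[OF z0])
  moreover have "z \<in> Omega z0 r" using z Omega_mono[of "r/4" r z0] r by auto
  ultimately have DW: "norm (D z * W z) \<le> B" by (rule maximum_modulus_frontier)
  have "exp (lam * (a - sqrt (r/4))) \<le> norm (W z)"
    using z unfolding W_def
    by (intro exp_le_norm_exterior_weight[OF z0 nonneg(3)]) (simp add: Omega_def dist_norm norm_minus_commute)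
  then have "norm (D z) * exp (lam * (a - sqrt (r/4))) \<le> norm (D z) * norm (W z)"
    by (rule mult_left_mono) simp
  also have "\<dots> \<le> B" using DW by (simp add: norm_mult)
  finally have "norm (D z) * exp (lam * (a - sqrt (r/4))) * exp (- lam * (a - sqrt (r/4)))
      \<le> B * exp (- lam * (a - sqrt (r/4)))"
    by (rule mult_right_mono) simp
  then show ?thesis
    unfolding mult.assoc exp_minus_inverse[of "lam * (a - sqrt (r/4))", unfolded mult_minus_left[symmetric]]
    by (simp add: a_def B_def)
qed

lemma exists_decay_exponent:
  fixes A d e :: real
  assumes "0 \<le> A" "0 < d" "0 < e"
  shows "\<exists>lam\<ge>0. A * exp (- lam * d) < e"
proof -
  define lam where "lam = ln (A / e + 1) / d"
  have "exp (lam * d) = A / e + 1" using assms by (simp add: lam_def add_nonneg_pos)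
  then have "A * exp (- lam * d) = A * e / (A + e)"
    using assms by (simp add: exp_minus field_simps)
  also have "\<dots> < e" using assms by (simp add: field_simps)
  finally have "A * exp (- lam * d) < e" .
  moreover have "0 \<le> lam" using assms by (simp add: lam_def)
  ultimately show ?thesis by blast
qed

lemma uniformly_Cauchy_on_Omega:
  assumes z0: "norm z0 = 1" and R: "0 < R" "R \<le> 1"
    and cont: "\<And>m. continuous_on (sphere 0 1 \<union> Omega z0 R) (g m)"
    and hol: "\<And>m. g m holomorphic_on Omega z0 R"
    and bound: "\<And>m w. w \<in> Omega z0 R \<Longrightarrow> norm (g m w) \<le> M"
    and Cauchy: "uniformly_Cauchy_on (sphere 0 1) g"
  shows "uniformly_Cauchy_on (sphere 0 1 \<union> Omega z0 (R/8)) g"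
proof (rule uniformly_Cauchy_onI)
  fix e :: real assume e: "0 < e"
  define r where "r = R/2"
  define a where "a = sqrt (3*r/8)"
  define d where "d = a - sqrt (r/4)"
  have r: "0 < r" "r \<le> 1/2" "r < R" using R by (auto simp: r_def)
  have "sqrt (r/4) < a" unfolding a_def using r by (intro real_sqrt_less_mono) simp
  then have "0 < d" by (simp add: d_def)
  obtain lam where lam: "0 \<le> lam" "2 * \<bar>M\<bar> * exp (- lam * d) < e/2"
    using exists_decay_exponent[of "2 * \<bar>M\<bar>" d "e/2"] \<open>0 < d\<close> e by auto
  define \<delta> where "\<delta> = e / (4 * exp (lam * a))"
  have \<delta>: "0 < \<delta>" "\<delta> * exp (lam * a) = e/4" using e by (simp_all add: \<delta>_def)
  have "1 \<le> exp (lam * a)" using lam r by (simp add: a_def)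
  then have "\<delta> \<le> e/4" using \<delta> by (metis mult_le_cancel_left1 order.strict_iff_not)
  obtain N where N: "\<And>x m p. x \<in> sphere 0 1 \<Longrightarrow> N \<le> m \<Longrightarrow> N \<le> p \<Longrightarrow> dist (g m x) (g p x) < \<delta>"
    using Cauchy \<delta>(1) unfolding uniformly_Cauchy_on_def by blast
  have close: "dist (g m x) (g p x) < e"
    if x: "x \<in> sphere 0 1 \<union> Omega z0 (r/4)" and "N \<le> m" "N \<le> p" for x m p
  proof (cases "x \<in> sphere 0 1")
    case True
    then show ?thesis using N[OF True \<open>N \<le> m\<close> \<open>N \<le> p\<close>] \<open>\<delta> \<le> e/4\<close> e by simp
  next
    case False
    then have "x \<in> Omega z0 (r/4)" using x by simp
    have "norm (g m x - g p x) \<le> (2 * \<bar>M\<bar> + \<delta> * exp (lam * a)) * exp (- lam * d)"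
      unfolding a_def d_def
    proof (rule Omega_two_constants[OF z0 r, where D = "\<lambda>w. g m w - g p w" and z = x])
      show "norm (g m w - g p w) \<le> \<delta>" if "w \<in> sphere 0 1" for w
        using N[OF that \<open>N \<le> m\<close> \<open>N \<le> p\<close>] by (simp add: dist_norm)
      show "norm (g m w - g p w) \<le> 2 * \<bar>M\<bar>" if "w \<in> Omega z0 R" for w
        using norm_triangle_ineq4[of "g m w" "g p w"] bound[OF that, of m] bound[OF that, of p] by simp
    qed (use \<delta> lam cont hol \<open>x \<in> Omega z0 (r/4)\<close> in \<open>auto intro: continuous_on_diff holomorphic_on_diff\<close>)
    also have "\<dots> = 2 * \<bar>M\<bar> * exp (- lam * d) + e/4 * exp (- lam * d)"
      using \<delta>(2) by (simp add: algebra_simps)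
    also have "\<dots> < e/2 + e/4"
    proof (rule add_less_le_mono[OF lam(2)])
      show "e/4 * exp (- lam * d) \<le> e/4" using e lam(1) \<open>0 < d\<close> by (intro mult_left_le) auto
    qed
    finally show ?thesis using e by (simp add: dist_norm)
  qed
  show "\<exists>N. \<forall>x\<in>sphere 0 1 \<union> Omega z0 (R/8). \<forall>m\<ge>N. \<forall>p\<ge>N. dist (g m x) (g p x) < e"
    using close by (auto simp: r_def intro!: exI[of _ N])
qed

lemma holomorphic_on_uniform_limit:
  assumes "open S" and hol: "\<And>n. f n holomorphic_on S" and lim: "uniform_limit S f g sequentially"
  shows "g holomorphic_on S"
  unfolding holomorphic_on_def
proof
  fix x assume "x \<in> S"
  obtain \<epsilon> where \<epsilon>: "0 < \<epsilon>" "cball x \<epsilon> \<subseteq> S" using open_contains_cball assms(1) \<open>x \<in> S\<close> by blast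
  have ul: "uniform_limit (cball x \<epsilon>) f g sequentially" using lim \<epsilon>(2) by (rule uniform_limit_on_subset)
  have "ball x \<epsilon> \<subseteq> S" using \<epsilon>(2) ball_subset_cball by (rule order_trans[rotated])
  then have "\<forall>n. continuous_on (cball x \<epsilon>) (f n) \<and> f n holomorphic_on ball x \<epsilon>"
    using continuous_on_subset[OF holomorphic_on_imp_continuous_on[OF hol] \<epsilon>(2)]
      holomorphic_on_subset[OF hol] by simp
  then have "g holomorphic_on ball x \<epsilon>"
    by (rule holomorphic_uniform_limit[OF always_eventually ul trivial_limit_sequentially])
  then have "g field_differentiable at x"
    using \<epsilon>(1) by (intro holomorphic_on_imp_differentiable_at[of _ "ball x \<epsilon>"]) auto
  then show "g field_differentiable at x within S" by (rule field_differentiable_at_within)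
qed

lemma extendable_outside_uniform_limit:
  assumes z0: "norm z0 = 1" and R: "0 < R" "R \<le> 1"
    and cont: "\<And>m. continuous_on (sphere 0 1 \<union> Omega z0 R) (g m)"
    and hol: "\<And>m. g m holomorphic_on Omega z0 R"
    and bound: "\<And>m w. w \<in> Omega z0 R \<Longrightarrow> norm (g m w) \<le> M"
    and lim: "uniform_limit (sphere 0 1) g u sequentially"
  shows "extendable_outside z0 u"
proof -
  define S where "S = sphere 0 1 \<union> Omega z0 (R/8)"
  have sub: "Omega z0 (R/8) \<subseteq> Omega z0 R" using R by (intro Omega_mono) simp
  then have S_sub: "S \<subseteq> sphere 0 1 \<union> Omega z0 R" by (auto simp: S_def)
  have "uniformly_Cauchy_on (sphere 0 1) g"
    using lim uniformly_convergent_Cauchy uniformly_convergent_on_def by blast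
  with cont hol bound have "uniformly_Cauchy_on S g"
    unfolding S_def by (rule uniformly_Cauchy_on_Omega[OF z0 R])
  then obtain l where l: "uniform_limit S g l sequentially"
    using Cauchy_uniformly_convergent uniformly_convergent_on_def by blast
  have "continuous_on S l"
    using continuous_on_subset[OF cont S_sub]
    by (intro uniform_limit_theorem[OF always_eventually l]) auto
  moreover have "l holomorphic_on Omega z0 (R/8)"
    by (rule holomorphic_on_uniform_limit[OF open_Omega holomorphic_on_subset[OF hol sub]])
      (rule uniform_limit_on_subset[OF l], simp add: S_def)
  moreover have "l z = u z" if "z \<in> sphere 0 1" for z
  proof -
    have "z \<in> S" using that by (simp add: S_def)
    then show ?thesis
      using LIMSEQ_unique tendsto_uniform_limitI[OF l] tendsto_uniform_limitI[OF lim that] by blast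
  qed
  ultimately show ?thesis
    unfolding extendable_outside_def S_def using R by (intro exI[of _ "R/8"] exI[of _ l]) auto
qed

text \<open>The functions extendable across \<open>z\<^sub>0\<close> are the countable union, over \<open>n\<close>, of the closures
  in the uniform norm on \<open>T\<close> of the following sets.\<close>

definition bounded_extensions :: "complex \<Rightarrow> nat \<Rightarrow> (complex \<Rightarrow> complex) set" where
  "bounded_extensions z0 n = {g. continuous_on (sphere 0 1 \<union> Omega z0 (1 / Suc n)) g \<and>
      g holomorphic_on Omega z0 (1 / Suc n) \<and> (\<forall>w\<in>Omega z0 (1 / Suc n). norm (g w) \<le> Suc n)}"

definition approximable :: "complex \<Rightarrow> nat \<Rightarrow> (complex \<Rightarrow> complex) \<Rightarrow> bool" where
  "approximable z0 n u \<longleftrightarrow>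
     (\<forall>e>0. \<exists>g\<in>bounded_extensions z0 n. \<forall>z\<in>sphere 0 1. norm (g z - u z) < e)"

lemma extendable_outside_if_approximable:
  assumes z0: "norm z0 = 1" and "approximable z0 n u"
  shows "extendable_outside z0 u"
proof -
  have "\<forall>m. \<exists>g\<in>bounded_extensions z0 n. \<forall>z\<in>sphere 0 1. norm (g z - u z) < 1 / Suc m"
    using assms(2) unfolding approximable_def by simp
  then obtain g where g: "\<And>m. g m \<in> bounded_extensions z0 n"
    and close: "\<And>m z. z \<in> sphere 0 1 \<Longrightarrow> norm (g m z - u z) < 1 / Suc m"
    by metis
  have "uniform_limit (sphere 0 1) g u sequentially"
    unfolding uniform_limit_sequentially_iff
  proof (intro allI impI)
    fix e :: real assume "0 < e"
    then obtain N where N: "1 / Suc N < e" using nat_approx_posE by blast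
    have "dist (g m z) (u z) < e" if "N \<le> m" "z \<in> sphere 0 1" for m z
    proof -
      have "1 / real (Suc m) \<le> 1 / Suc N" using that(1) by (intro divide_left_mono) auto
      then show ?thesis using close[OF that(2), of m] N by (simp add: dist_norm)
    qed
    then show "\<exists>N. \<forall>m\<ge>N. \<forall>z\<in>sphere 0 1. dist (g m z) (u z) < e" by blast
  qed
  then show ?thesis
    using g by (intro extendable_outside_uniform_limit[OF z0, of "1 / Suc n" g "Suc n"])
      (auto simp: bounded_extensions_def)
qed

lemma approximable_uniform_closed:
  assumes "\<And>e. 0 < e \<Longrightarrow> \<exists>v. approximable z0 n v \<and> (\<forall>z\<in>sphere 0 1. norm (v z - u z) < e)"
  shows "approximable z0 n u"
  unfolding approximable_def
proof (intro allI impI)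
  fix e :: real assume "0 < e"
  then obtain v where v: "approximable z0 n v" "\<And>z. z \<in> sphere 0 1 \<Longrightarrow> norm (v z - u z) < e/2"
    using assms[of "e/2"] by auto
  then obtain g where "g \<in> bounded_extensions z0 n" "\<And>z. z \<in> sphere 0 1 \<Longrightarrow> norm (g z - v z) < e/2"
    using \<open>0 < e\<close> unfolding approximable_def by (meson half_gt_zero)
  moreover have "norm (g z - u z) < e" if "z \<in> sphere 0 1"
    and "norm (g z - v z) < e/2" for z g
    using norm_triangle_ineq[of "g z - v z" "v z - u z"] v(2)[OF that(1)] that(2) by simp
  ultimately show "\<exists>g\<in>bounded_extensions z0 n. \<forall>z\<in>sphere 0 1. norm (g z - u z) < e"
    by blast
qed

lemma openin_not_approximable: "openin (Ck_top k) {u \<in> Ck k. \<not> approximable z0 n u}"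
proof (rule openin_Ck_topI_uniform)
  fix u assume u: "u \<in> {u \<in> Ck k. \<not> approximable z0 n u}"
  have "\<exists>e>0. \<forall>v. approximable z0 n v \<longrightarrow> \<not> (\<forall>z\<in>sphere 0 1. norm (v z - u z) < e)"
  proof (rule ccontr)
    assume "\<not> ?thesis"
    then have "approximable z0 n u" by (intro approximable_uniform_closed) blast
    with u show False by simp
  qed
  then show "\<exists>e>0. \<forall>v\<in>Ck k. (\<forall>z\<in>sphere 0 1. norm (v z - u z) < e) \<longrightarrow>
      v \<in> {u \<in> Ck k. \<not> approximable z0 n u}"
    by blast
qed auto

lemma continuous_on_glue_sphere:
  assumes u: "continuous_on (sphere 0 1) u" and "0 < r"
    and g: "continuous_on (sphere 0 1 \<union> Omega z0 r) g"
    and eq: "\<And>z. z \<in> ball z0 r \<inter> sphere 0 1 \<Longrightarrow> g z = u z"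
  shows "continuous_on (sphere 0 1 \<union> Omega z0 (r/2)) (\<lambda>w. if w \<in> sphere 0 1 then u w else g w)"
    (is "continuous_on ?S ?g")
proof -
  define P1 where "P1 = ?S \<inter> cball z0 (r/2)"
  define P2 where "P2 = ?S \<inter> - ball z0 (r/2)"
  have S: "?S = P1 \<union> P2" by (auto simp: P1_def P2_def)
  have "P1 \<subseteq> sphere 0 1 \<union> Omega z0 r"
    using Omega_mono[of "r/2" r z0] \<open>0 < r\<close> by (auto simp: P1_def)
  then have "continuous_on P1 ?g"
    by (rule continuous_on_eq[OF continuous_on_subset[OF g]]) (use eq \<open>0 < r\<close> in \<open>auto simp: P1_def\<close>)
  moreover have P2: "P2 \<subseteq> sphere 0 1" by (auto simp: P2_def Omega_def)
  then have "continuous_on P2 ?g"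
    by (rule continuous_on_eq[OF continuous_on_subset[OF u]]) (use P2 in auto)
  moreover have "closedin (top_of_set ?S) P1" unfolding P1_def by (rule closedin_closed_Int) simp
  moreover have "closedin (top_of_set ?S) P2"
    unfolding P2_def by (rule closedin_closed_Int) (simp add: closed_Compl)
  ultimately have "continuous_on (P1 \<union> P2) ?g"
    by (intro continuous_on_Un_local) (simp_all only: S)
  then show ?thesis by (simp only: S)
qed

lemma extendable_outside_imp_approximable:
  assumes u: "u \<in> Ck k" and ext: "extendable_outside z0 u"
  shows "\<exists>n. approximable z0 n u"
proof -
  obtain r g where r: "0 < r" and cont: "continuous_on (sphere 0 1 \<union> Omega z0 r) g"
    and hol: "g holomorphic_on Omega z0 r" and eq: "\<And>z. z \<in> ball z0 r \<inter> sphere 0 1 \<Longrightarrow> g z = u z"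
    using ext unfolding extendable_outside_def by blast
  define K where "K = cball z0 (r/2) \<inter> {w. 1 \<le> norm w}"
  have K_sub: "K \<subseteq> sphere 0 1 \<union> Omega z0 r"
  proof
    fix w assume "w \<in> K"
    then have "dist z0 w \<le> r/2" "1 \<le> norm w" by (auto simp: K_def)
    then show "w \<in> sphere 0 1 \<union> Omega z0 r" using r by (cases "norm w = 1") (auto simp: Omega_def)
  qed
  have "compact K" unfolding K_def
    by (intro compact_Int_closed compact_cball closed_Collect_le continuous_intros)
  with continuous_on_subset[OF cont K_sub] have "compact (g ` K)" by (rule compact_continuous_image)
  then obtain B where B: "\<forall>y\<in>g ` K. norm y \<le> B" using compact_imp_bounded bounded_iff by metis
  obtain n :: nat where "max B (2/r) < n" using reals_Archimedean2 by blast
  then have n: "B < Suc n" "2/r < Suc n" by simp_all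
  define \<rho> where "\<rho> = 1 / real (Suc n)"
  have \<rho>: "0 < \<rho>" "\<rho> \<le> r/2" using n(2) r by (auto simp: \<rho>_def field_simps)
  define g' where "g' w = (if w \<in> sphere 0 1 then u w else g w)" for w
  have "Omega z0 \<rho> \<subseteq> Omega z0 (r/2)" "Omega z0 (r/2) \<subseteq> Omega z0 r"
    using \<rho> by (auto intro!: Omega_mono)
  moreover have "continuous_on (sphere 0 1 \<union> Omega z0 (r/2)) g'"
    unfolding g'_def using Ck_continuous_on_sphere[OF u] r cont eq by (rule continuous_on_glue_sphere)
  ultimately have "continuous_on (sphere 0 1 \<union> Omega z0 \<rho>) g'"
    by (elim continuous_on_subset) blast
  moreover have "g' holomorphic_on Omega z0 \<rho>"
    by (rule holomorphic_transform[OF holomorphic_on_subset[OF hol]])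
      (use \<open>Omega z0 \<rho> \<subseteq> Omega z0 (r/2)\<close> \<open>Omega z0 (r/2) \<subseteq> Omega z0 r\<close>
        in \<open>auto simp: g'_def Omega_def\<close>)
  moreover have "norm (g' w) \<le> Suc n" if "w \<in> Omega z0 \<rho>" for w
  proof -
    have "w \<in> K" "g' w = g w" using that \<rho> by (auto simp: K_def g'_def Omega_def)
    then show ?thesis using B n(1) by fastforce
  qed
  ultimately have "g' \<in> bounded_extensions z0 n" unfolding bounded_extensions_def \<rho>_def by blast
  moreover have "g' z = u z" if "z \<in> sphere 0 1" for z using that by (simp add: g'_def)
  ultimately have "approximable z0 n u" unfolding approximable_def by (metis norm_zero right_minus_eq)
  then show ?thesis ..
qed

lemma U2_eq_Inter_not_approximable:
  assumes "norm z0 = 1"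
  shows "U2 z0 k = (\<Inter>n. {u \<in> Ck k. \<not> approximable z0 n u})"
  unfolding U2_eq
proof (intro equalityI subsetI)
  fix u assume "u \<in> {u \<in> Ck k. \<not> extendable_outside z0 u}"
  then show "u \<in> (\<Inter>n. {u \<in> Ck k. \<not> approximable z0 n u})"
    using extendable_outside_if_approximable[OF assms] by blast
next
  fix u assume "u \<in> (\<Inter>n. {u \<in> Ck k. \<not> approximable z0 n u})"
  then show "u \<in> {u \<in> Ck k. \<not> extendable_outside z0 u}"
    using extendable_outside_imp_approximable by blast
qed

lemma holomorphic_on_paste_zero_left:
  assumes S: "open S" and cont: "continuous_on (S \<inter> {w. 0 \<le> Re w}) F"
    and hol: "F holomorphic_on S \<inter> {w. 0 < Re w}"
    and zero: "\<And>w. w \<in> S \<Longrightarrow> Re w = 0 \<Longrightarrow> F w = 0"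
  shows "(\<lambda>w. if Re w \<le> 0 then 0 else F w) holomorphic_on S"
    (is "?F holomorphic_on S")
proof (rule holomorphic_on_paste_across_line[OF S, of 1 _ 0])
  have S_split: "S = (S \<inter> {w. Re w \<le> 0}) \<union> (S \<inter> {w. 0 \<le> Re w})" by auto
  have "continuous_on ((S \<inter> {w. Re w \<le> 0}) \<union> (S \<inter> {w. 0 \<le> Re w})) ?F"
  proof (rule continuous_on_cases_local)
    show "closedin (top_of_set (S \<inter> {w. Re w \<le> 0} \<union> S \<inter> {w. 0 \<le> Re w})) (S \<inter> {w. Re w \<le> 0})"
      by (subst S_split[symmetric], rule closedin_closed_Int, rule closed_halfspace_Re_le)
    show "closedin (top_of_set (S \<inter> {w. Re w \<le> 0} \<union> S \<inter> {w. 0 \<le> Re w})) (S \<inter> {w. 0 \<le> Re w})"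
      by (subst S_split[symmetric], rule closedin_closed_Int, rule closed_halfspace_Re_ge)
  qed (use cont zero in auto)
  then show "continuous_on S ?F" using S_split by simp
  have "{z. 1 \<bullet> z < 0} = {w. Re w < 0}" "{z. 0 < 1 \<bullet> z} = {w. 0 < Re w}"
    by (auto simp: inner_complex_def)
  then show "?F holomorphic_on S \<inter> {z. 1 \<bullet> z < 0}" "?F holomorphic_on S \<inter> {z. 0 < 1 \<bullet> z}"
    by (auto intro: holomorphic_transform[of "\<lambda>_. 0"] holomorphic_transform[OF hol])
qed simp

lemma vanishing_on_right_half_closure:
  fixes F :: "complex \<Rightarrow> 'a::real_normed_vector"
  assumes "open S" and cont: "continuous_on (S \<inter> {w. 0 \<le> Re w}) F"
    and zero: "\<And>w. w \<in> S \<inter> {w. 0 < Re w} \<Longrightarrow> F w = 0"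
    and w: "w \<in> S \<inter> {w. 0 \<le> Re w}"
  shows "F w = 0"
proof -
  let ?H = "S \<inter> {w. 0 < Re w}" and ?Hc = "S \<inter> {w. 0 \<le> Re w}"
  have "closedin (top_of_set ?Hc) {w \<in> ?Hc. F w = 0}"
    using cont by (rule continuous_closedin_preimage_constant)
  then obtain C where "closed C" and C: "{w \<in> ?Hc. F w = 0} = ?Hc \<inter> C"
    unfolding closedin_closed by blast
  have "?H \<subseteq> C"
  proof
    fix x assume "x \<in> ?H"
    then have "x \<in> {w \<in> ?Hc. F w = 0}" using zero by simp
    then show "x \<in> C" unfolding C by simp
  qed
  then have "closure ?H \<subseteq> C" using \<open>closed C\<close> by (rule closure_minimal)
  moreover have "closure {w::complex. 0 < Re w} = {w. 0 \<le> Re w}"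
    using closure_halfspace_gt[of "1::complex" 0] by (simp add: inner_complex_def)
  then have "?Hc \<subseteq> closure ?H" using open_Int_closure_subset[OF \<open>open S\<close>, of "{w. 0 < Re w}"] by simp
  ultimately have "w \<in> ?Hc \<inter> C" using w by blast
  then show ?thesis unfolding C[symmetric] by simp
qed

lemma half_disc_vanishing:
  assumes "0 < \<rho>"
    and cont: "continuous_on (ball 0 \<rho> \<inter> {w. 0 \<le> Re w}) F"
    and hol: "F holomorphic_on ball 0 \<rho> \<inter> {w. 0 < Re w}"
    and zero: "\<And>w. w \<in> ball 0 \<rho> \<Longrightarrow> Re w = 0 \<Longrightarrow> Im w < 0 \<Longrightarrow> F w = 0"
    and w: "w \<in> ball 0 \<rho> \<inter> {w. 0 \<le> Re w}"
  shows "F w = 0"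
proof -
  define c where "c = - of_real (\<rho>/2) * \<i>"
  define B where "B = ball c (\<rho>/4)"
  have B_sub: "B \<subseteq> ball 0 \<rho> \<inter> {w. Im w < 0}"
  proof
    fix w assume "w \<in> B"
    then have wc: "norm (w - c) < \<rho>/4" by (simp add: B_def dist_norm norm_minus_commute)
    have nc: "norm c = \<rho>/2" and Im_c: "Im c = - (\<rho>/2)" using \<open>0 < \<rho>\<close> by (simp_all add: c_def norm_mult)
    have "norm w \<le> norm c + norm (w - c)" using norm_triangle_ineq[of c "w - c"] by simp
    then have "norm w < \<rho>" using nc wc \<open>0 < \<rho>\<close> by linarith
    moreover have "Im (w - c) \<le> norm (w - c)" by (rule order_trans[OF abs_ge_self abs_Im_le_cmod])
    then have "Im w < 0" using Im_c wc \<open>0 < \<rho>\<close> by (simp only: minus_complex.sel)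
    ultimately show "w \<in> ball 0 \<rho> \<inter> {w. Im w < 0}" by simp
  qed
  define Ft where "Ft w = (if Re w \<le> 0 then 0 else F w)" for w
  have holFt: "Ft holomorphic_on B"
    unfolding Ft_def
  proof (rule holomorphic_on_paste_zero_left)
    show "continuous_on (B \<inter> {w. 0 \<le> Re w}) F"
      by (rule continuous_on_subset[OF cont]) (use B_sub in blast)
    show "F holomorphic_on B \<inter> {w. 0 < Re w}"
      by (rule holomorphic_on_subset[OF hol]) (use B_sub in blast)
    show "F w = 0" if "w \<in> B" "Re w = 0" for w
    proof (rule zero)
      show "w \<in> ball 0 \<rho>" "Im w < 0" using B_sub that(1) by auto
    qed (rule that(2))
  qed (simp add: B_def)
  have Ft0: "Ft w = 0" if "w \<in> B" for w
  proof (rule analytic_continuation_open[of "B \<inter> {w. Re w < 0}" B Ft "\<lambda>_. 0"])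
    show "open (B \<inter> {w. Re w < 0})" "open B" "connected B"
      by (simp_all add: B_def open_Int open_halfspace_Re_lt)
    have "c - of_real (\<rho>/8) \<in> B \<inter> {w. Re w < 0}" using \<open>0 < \<rho>\<close> by (simp add: B_def c_def dist_norm)
    then show "B \<inter> {w. Re w < 0} \<noteq> {}" by blast
    show "Ft z = 0" if "z \<in> B \<inter> {w. Re w < 0}" for z using that by (simp add: Ft_def)
  qed (use holFt that in simp_all)
  let ?H = "ball 0 \<rho> \<inter> {w. 0 < Re w}"
  have F0: "F w = 0" if "w \<in> ?H" for w
  proof (rule analytic_continuation_open[of "B \<inter> {w. 0 < Re w}" ?H F "\<lambda>_. 0"])
    show "open (B \<inter> {w. 0 < Re w})" "open ?H"
      by (simp_all add: B_def open_Int open_halfspace_Re_gt)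
    have "c + of_real (\<rho>/8) \<in> B \<inter> {w. 0 < Re w}" using \<open>0 < \<rho>\<close> by (simp add: B_def c_def dist_norm)
    then show "B \<inter> {w. 0 < Re w} \<noteq> {}" by blast
    show "connected ?H" by (intro convex_connected convex_Int convex_ball convex_halfspace_Re_gt)
    show "B \<inter> {w. 0 < Re w} \<subseteq> ?H" using B_sub by blast
    show "F z = 0" if "z \<in> B \<inter> {w. 0 < Re w}" for z using that Ft0[of z] by (simp add: Ft_def)
  qed (use hol that in simp_all)
  then show ?thesis by (rule vanishing_on_right_half_closure[OF open_ball cont _ w])
qed

lemma times_exp_in_ball_near_0:
  fixes c :: complex
  assumes "0 < r"
  obtains \<rho> where "0 < \<rho>" "\<rho> \<le> 1" "\<And>w. norm w < \<rho> \<Longrightarrow> c * exp w \<in> ball c r"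
proof -
  have "isCont (\<lambda>w. c * exp w) (0::complex)" by (intro continuous_intros)
  then obtain d where "0 < d" "\<And>w::complex. dist w 0 < d \<Longrightarrow> dist (c * exp w) (c * exp 0) < r"
    using assms unfolding continuous_at_eps_delta by blast
  then show ?thesis by (intro that[of "min d 1"]) (auto simp: dist_commute)
qed

definition flat_profile :: "complex \<Rightarrow> real \<Rightarrow> real" where
  "flat_profile z0 \<theta> = flat_step 1 (sin \<theta> * Re z0 - cos \<theta> * Im z0)"

definition one_sided_flat :: "complex \<Rightarrow> complex \<Rightarrow> complex" where
  "one_sided_flat z0 z = (if z \<in> sphere 0 1 then of_real (flat_step 1 (Im (z * cnj z0))) else 0)"

lemma onT_one_sided_flat: "onT (one_sided_flat z0) = (\<lambda>\<theta>. complex_of_real (flat_profile z0 \<theta>))"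
  by (auto simp: onT_def one_sided_flat_def flat_profile_def algebra_simps)

lemma infinitely_differentiable_flat_profile: "infinitely_differentiable (flat_profile z0)"
  unfolding infinitely_differentiable_def flat_profile_def
  using nth_differentiable_compose[OF nth_differentiable_flat_step nth_differentiable_diff
      [OF nth_differentiable_mult[OF conjunct1[OF nth_differentiable_sin_cos] nth_differentiable_const]
        nth_differentiable_mult[OF conjunct2[OF nth_differentiable_sin_cos] nth_differentiable_const]]]
  by blast

lemma one_sided_flat_Ck: "one_sided_flat z0 \<in> Ck k"
proof -
  have "Dn l (onT (one_sided_flat z0)) differentiable at t" for l t
    unfolding onT_one_sided_flat by (rule Dn_of_real_differentiable[OF infinitely_differentiable_flat_profile])
  then show ?thesis
    by (auto simp: Ck_def one_sided_flat_def intro!: continuous_at_imp_continuous_on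
        differentiable_imp_continuous_within)
qed

lemma bounded_Dn_one_sided_flat: "\<exists>B. \<forall>\<theta>. norm (Dn l (onT (one_sided_flat z0)) \<theta>) \<le> B"
proof -
  let ?f = "(deriv ^^ l) (flat_profile z0)"
  have smooth: "infinitely_differentiable ?f"
    by (rule infinitely_differentiable_deriv_funpow[OF infinitely_differentiable_flat_profile])
  have "bounded (range ?f)"
  proof (rule continuous_periodic_bounded)
    show "continuous_on UNIV ?f"
      using infinitely_differentiable_has_deriv[OF smooth]
      by (auto intro!: continuous_at_imp_continuous_on DERIV_isCont)
    show "?f (x + 2 * pi) = ?f x" for x
      by (rule deriv_funpow_periodic[OF infinitely_differentiable_flat_profile])
        (simp add: flat_profile_def)
  qed simp
  then show ?thesis
    unfolding onT_one_sided_flat Dn_of_real[OF infinitely_differentiable_flat_profile]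
    by (auto simp: bounded_iff)
qed

lemma one_sided_flat_not_extendable:
  assumes z0: "norm z0 = 1"
  shows "\<not> extendable_outside z0 (one_sided_flat z0)"
proof
  assume "extendable_outside z0 (one_sided_flat z0)"
  then obtain r g where r: "0 < r" and cont: "continuous_on (sphere 0 1 \<union> Omega z0 r) g"
    and hol: "g holomorphic_on Omega z0 r"
    and eq: "\<And>z. z \<in> ball z0 r \<inter> sphere 0 1 \<Longrightarrow> g z = one_sided_flat z0 z"
    unfolding extendable_outside_def by blast
  obtain \<rho> where \<rho>: "0 < \<rho>" "\<rho> \<le> 1" and near: "\<And>w. norm w < \<rho> \<Longrightarrow> z0 * exp w \<in> ball z0 r"
    using times_exp_in_ball_near_0[OF r] by blast
  define F where "F w = g (z0 * exp w)" for w
  have norm_P: "norm (z0 * exp w) = exp (Re w)" for w using z0 by (simp add: norm_mult norm_exp_eq_Re)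
  have "(\<lambda>w. z0 * exp w) ` (ball 0 \<rho> \<inter> {w. 0 \<le> Re w}) \<subseteq> sphere 0 1 \<union> Omega z0 r"
    using near norm_P by (force simp: Omega_def)
  then have contF: "continuous_on (ball 0 \<rho> \<inter> {w. 0 \<le> Re w}) F"
    unfolding F_def by (intro continuous_on_compose2[OF cont]) (auto intro!: continuous_intros)
  have "(\<lambda>w. z0 * exp w) ` (ball 0 \<rho> \<inter> {w. 0 < Re w}) \<subseteq> Omega z0 r"
    using near norm_P by (force simp: Omega_def)
  then have holF: "F holomorphic_on ball 0 \<rho> \<inter> {w. 0 < Re w}"
    unfolding F_def by (intro holomorphic_on_compose_gen[OF _ hol, unfolded o_def]) (auto intro!: holomorphic_intros)
  have on_axis: "F w = of_real (flat_step 1 (sin (Im w)))" if "norm w < \<rho>" "Re w = 0" for w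
  proof -
    have "z0 * exp w \<in> ball z0 r \<inter> sphere 0 1" using that near norm_P by simp
    moreover have "Im (z0 * exp w * cnj z0) = sin (Im w)"
      using complex_norm_square[of z0] z0 that by (simp add: mult.commute[of z0] mult.assoc Im_exp)
    ultimately show ?thesis using norm_P that by (simp add: F_def eq one_sided_flat_def)
  qed
  have "F w = 0" if "w \<in> ball 0 \<rho> \<inter> {w. 0 \<le> Re w}" for w
  proof (rule half_disc_vanishing[OF \<rho>(1) contF holF _ that])
    fix w assume w: "w \<in> ball 0 \<rho>" "Re w = 0" "Im w < 0"
    have "\<bar>Im w\<bar> < pi" using abs_Im_le_cmod[of w] w(1) \<rho>(2) pi_gt3 by simp
    then have "sin (Im w) < 0" using w(3) sin_gt_zero[of "- Im w"] by simp
    then show "F w = 0" using on_axis[of w] w by (simp add: flat_step_def)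
  qed
  moreover have "of_real (\<rho>/2) * \<i> \<in> ball 0 \<rho> \<inter> {w. 0 \<le> Re w}" using \<rho> by (simp add: norm_mult)
  moreover have "0 < sin (\<rho>/2)" using \<rho> pi_gt3 by (intro sin_gt_zero) auto
  ultimately show False using on_axis[of "of_real (\<rho>/2) * \<i>"] \<rho> by (simp add: norm_mult flat_step_def)
qed

lemma small_multiple_one_sided_flat:
  assumes "0 < \<epsilon>"
  obtains c where "0 < c" "\<And>l. l \<le> N \<Longrightarrow> seminorm_Ck l (\<lambda>z. of_real c * one_sided_flat z0 z) < \<epsilon>"
proof -
  have "\<forall>l. \<exists>B. \<forall>\<theta>. norm (Dn l (onT (one_sided_flat z0)) \<theta>) \<le> B"
    using bounded_Dn_one_sided_flat by blast
  then obtain B where B: "\<And>l \<theta>. norm (Dn l (onT (one_sided_flat z0)) \<theta>) \<le> B l"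
    by (metis choice)
  define M where "M = 1 + (\<Sum>l\<le>N. \<bar>B l\<bar>)"
  have M: "0 < M" "\<And>l. l \<le> N \<Longrightarrow> B l \<le> M"
    using member_le_sum[of _ "{..N}" "\<lambda>l. \<bar>B l\<bar>"] sum_nonneg[of "{..N}" "\<lambda>l. \<bar>B l\<bar>"]
    by (force simp: M_def)+
  define c where "c = \<epsilon> / (2 * M)"
  have c: "0 < c" "c * M < \<epsilon>" using assms M(1) by (simp_all add: c_def field_simps)
  have "seminorm_Ck l (\<lambda>z. of_real c * one_sided_flat z0 z) < \<epsilon>" if "l \<le> N" for l
  proof -
    have "Dn l (onT (\<lambda>z. of_real c * one_sided_flat z0 z)) = (\<lambda>t. of_real c * Dn l (onT (one_sided_flat z0)) t)"
      using Dn_scaled[of l "onT (one_sided_flat z0)" "of_real c"]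
        Dn_of_real_differentiable[OF infinitely_differentiable_flat_profile]
      by (simp add: onT_def onT_one_sided_flat[unfolded onT_def, symmetric])
    then have "seminorm_Ck l (\<lambda>z. of_real c * one_sided_flat z0 z) \<le> c * M"
      unfolding seminorm_Ck_def
      using B[of l] M(2)[OF that] c(1)
      by (auto simp: norm_mult intro!: cSUP_least mult_left_mono order_trans[OF _ M(2)[OF that]])
    with c(2) show ?thesis by linarith
  qed
  with c(1) show ?thesis by (rule that)
qed

lemma not_extendable_add_one_sided_flat:
  assumes "norm z0 = 1" "extendable_outside z0 u" "c \<noteq> 0"
  shows "\<not> extendable_outside z0 (\<lambda>z. u z + c * one_sided_flat z0 z)"
proof
  assume "extendable_outside z0 (\<lambda>z. u z + c * one_sided_flat z0 z)"
  then have "extendable_outside z0 (\<lambda>z. (1/c) * (u z + c * one_sided_flat z0 z) + (- 1/c) * u z)"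
    using assms(2) by (rule extendable_outside_lincomb)
  then show False
    using one_sided_flat_not_extendable[OF assms(1)] assms(3) by (simp add: field_simps)
qed

lemma U2_dense:
  assumes z0: "norm z0 = 1"
  shows "(Ck_top k) closure_of (U2 z0 k) = topspace (Ck_top k)"
proof -
  have "u \<in> (Ck_top k) closure_of (U2 z0 k)" if u: "u \<in> Ck k" for u
    unfolding in_closure_of topspace_Ck_top
  proof (intro conjI allI impI)
    fix T assume "u \<in> T \<and> openin (Ck_top k) T"
    then obtain N \<epsilon> where "0 < \<epsilon>" and ball: "\<And>v. v \<in> Ck k \<Longrightarrow>
        (\<forall>l\<le>N. enat l \<le> k \<longrightarrow> seminorm_Ck l (\<lambda>z. v z - u z) < \<epsilon>) \<Longrightarrow> v \<in> T"
      unfolding openin_Ck_top Ck_open_def by blast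
    show "\<exists>v. v \<in> U2 z0 k \<and> v \<in> T"
    proof (cases "extendable_outside z0 u")
      case False
      then show ?thesis using u \<open>u \<in> T \<and> openin (Ck_top k) T\<close> by (auto simp: U2_eq)
    next
      case True
      obtain c where c: "0 < c" "\<And>l. l \<le> N \<Longrightarrow> seminorm_Ck l (\<lambda>z. of_real c * one_sided_flat z0 z) < \<epsilon>"
        using small_multiple_one_sided_flat[OF \<open>0 < \<epsilon>\<close>] by blast
      define v where "v z = u z + of_real c * one_sided_flat z0 z" for z
      have "v \<in> Ck k" unfolding v_def by (rule Ck_add_scaled[OF u one_sided_flat_Ck])
      moreover have "\<not> extendable_outside z0 v"
        unfolding v_def using c(1) by (intro not_extendable_add_one_sided_flat[OF z0 True]) simp
      moreover have "v \<in> T" using c(2) by (intro ball[OF \<open>v \<in> Ck k\<close>]) (simp add: v_def)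
      ultimately show ?thesis by (auto simp: U2_eq)
    qed
  qed (use u in simp)
  then have "topspace (Ck_top k) \<subseteq> (Ck_top k) closure_of (U2 z0 k)"
    unfolding topspace_Ck_top by blast
  with closure_of_subset_topspace show ?thesis by (rule antisym)
qed

theorem theorem3p12:
  fixes z0 :: complex and k :: enat
  assumes "z0 \<in> sphere 0 1"
  shows "gdelta_in (Ck_top k) (U2 z0 k) \<and> (Ck_top k) closure_of (U2 z0 k) = topspace (Ck_top k)"
proof
  have z0: "norm z0 = 1" using assms by simp
  show "gdelta_in (Ck_top k) (U2 z0 k)"
    unfolding U2_eq_Inter_not_approximable[OF z0]
    by (intro gdelta_in_Inter) (auto intro!: open_imp_gdelta_in openin_not_approximable)
  show "(Ck_top k) closure_of (U2 z0 k) = topspace (Ck_top k)" by (rule U2_dense[OF z0])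
qed

end
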